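(* Let $2\le k<n$ be integers, let $\mathcal D=\{d_1,\dots,d_k\}\subset\{0,1,\dots,n-1\}$ be a set of $k$ digits, and let $\alpha=\frac{\log k}{\log n}\in(0,1)$. For each $6<p<\infty$ let $c_{p,\alpha}>0$ be the exponent provided by Theorem 1.1 (the main decoupling theorem for AD-regular collections on the parabola). Then for every $\epsilon>0$ there is a constant $C=C(\epsilon,k,n,p)$ such that for every $i\ge1$, $$\mathrm{Dec}_p(C_i)\le C\,k^{\,i\left(\frac12-\frac3p-c_{p,\alpha}+\epsilon\right)}.$$
   Context: For $i\ge1$, $C_i=\{\sum_{j=1}^i a_jn^{-j}: a_j\in\mathcal D\}$ and $\mathcal I_i$ is the collection of the $k^i$ intervals $[c,c+n^{-i}]$, $c\in C_i$. For $I\in\mathcal I_i$ let $\theta_I=\{(x,x^2+t): x\in I,\ |t|\le n^{-2i}\}$. $\mathrm{Dec}_p(C_i)$ is the smallest constant such that $$\Big\|\sum_{I\in\mathcal I_i}F_{\theta_I}\Big\|_{L^p(\mathbb R^2)}\le \mathrm{Dec}_p(C_i)\Big(\sum_{I\in\mathcal I_i}\|F_{\theta_I}\|_{L^p(\mathbb R^2)}^2\Big)^{1/2}$$ for all functions $F_{\theta_I}:\mathbb R^2\to\mathbb C$ with $\operatorname{supp}\widehat{F_{\theta_I}}\subset\theta_I$. Theorem 1.1 (main theorem): for $\alpha\in(0,1)$ and $6<p<\infty$ there is $c_{p,\alpha}>0$ such that for all $C_{AD}\ge1,\epsilon>0$, all $R\ge 1$, all $(\alpha,R^{1/2},C_{AD})$-AD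 regular collections $\mathcal I$ and all $F$ with $\widehat F$ supported in $\mathcal N_{1/R}(\mathcal I)$, $\|F\|_{L^p}\lesssim_{\epsilon,C_{AD},p,\alpha}R^\epsilon(\#\Theta(\mathcal I))^{\frac12-\frac3p-c_{p,\alpha}}(\sum_\theta\|F_\theta\|_{L^p}^2)^{1/2}$. Here a collection $\mathcal I_R$ of pairwise disjoint length-$R^{-1}$ intervals in $[-1,1]$ is $(\alpha,R,C_{AD})$-AD regular if every interval $J$ with $2/R\le|J|\le4$ centered at a point of $\bigcup\mathcal I_R$ contains between $C_{AD}^{-1}(|J|R)^\alpha$ and $C_{AD}(|J|R)^\alpha$ intervals of $\mathcal I_R$; $\mathcal N_\delta(\mathcal I)=\{(x,x^2+t):x\in\bigcup\mathcal I,|t|\le\delta\}$; $\Theta(\mathcal I)$ consists of the regions $\{(x,x^2+t):x\in I,|t|\le1/R\}$, $I\in\mathcal I$; and $\widehat{F_\theta}=\widehat F 1_\theta$. *)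

theory Defs
  imports "HOL-Analysis.Analysis"
begin

type_synonym pt = "real \<times> real"

definition fourier2 :: "(pt \<Rightarrow> complex) \<Rightarrow> pt \<Rightarrow> complex" where
  "fourier2 F \<xi> = integral\<^sup>L lborel
      (\<lambda>x. F x * exp (- (2 * pi * \<i>) * complex_of_real (x \<bullet> \<xi>)))"

definition Lp_norm :: "real \<Rightarrow> (pt \<Rightarrow> complex) \<Rightarrow> real" where
  "Lp_norm p F = (integral\<^sup>L lborel (\<lambda>x. norm (F x) powr p)) powr (1 / p)"

definition fourier_supported :: "real \<Rightarrow> (pt \<Rightarrow> complex) \<Rightarrow> pt set \<Rightarrow> bool" where
  "fourier_supported p F S \<longleftrightarrow>
     integrable lborel F \<and> integrable lborel (\<lambda>x. norm (F x) powr p) \<and>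
     (\<forall>\<xi>. \<xi> \<notin> S \<longrightarrow> fourier2 F \<xi> = 0)"

definition theta :: "real \<Rightarrow> real \<Rightarrow> real \<Rightarrow> pt set" where
  "theta a w \<delta> = {(x, x\<^sup>2 + t) | x t. a \<le> x \<and> x \<le> a + w \<and> \<bar>t\<bar> \<le> \<delta>}"

text \<open>(alpha, R, C_AD)-AD regular collection of intervals [a, a + 1/R], a in A
  (collections are represented by the set of left endpoints).\<close>
definition ad_regular :: "real \<Rightarrow> real \<Rightarrow> real \<Rightarrow> real set \<Rightarrow> bool" where
  "ad_regular \<alpha> R C A \<longleftrightarrow>
     (\<forall>a\<in>A. -1 \<le> a \<and> a + 1 / R \<le> 1) \<and>
     (\<forall>a\<in>A. \<forall>b\<in>A. a \<noteq> b \<longrightarrow> {a..a + 1 / R} \<inter> {b..b + 1 / R} = {}) \<and>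
     (\<forall>x \<in> (\<Union>a\<in>A. {a..a + 1 / R}). \<forall>r. 2 / R \<le> 2 * r \<and> 2 * r \<le> 4 \<longrightarrow>
        (let N = real (card {a\<in>A. {a..a + 1 / R} \<subseteq> {x - r..x + r}}) in
           inverse C * (2 * r * R) powr \<alpha> \<le> N \<and> N \<le> C * (2 * r * R) powr \<alpha>))"

definition thm11_holds :: "real \<Rightarrow> real \<Rightarrow> real \<Rightarrow> bool" where
  "thm11_holds \<alpha> p c \<longleftrightarrow> c > 0 \<and>
     (\<forall>CAD \<ge> 1. \<forall>\<epsilon> > 0. \<exists>K. \<forall>R \<ge> 1. \<forall>A. ad_regular \<alpha> (sqrt R) CAD A \<longrightarrow>
        (\<forall>G :: real \<Rightarrow> pt \<Rightarrow> complex.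
           (\<forall>a\<in>A. fourier_supported p (G a) (theta a (1 / sqrt R) (1 / R))) \<longrightarrow>
           Lp_norm p (\<lambda>x. \<Sum>a\<in>A. G a x)
             \<le> K * R powr \<epsilon> * real (card A) powr (1/2 - 3/p - c)
                 * sqrt (\<Sum>a\<in>A. (Lp_norm p (G a))\<^sup>2)))"

definition Cset :: "nat \<Rightarrow> nat set \<Rightarrow> nat \<Rightarrow> real set" where
  "Cset n D i = {(\<Sum>j=1..i. real (a j) / real n ^ j) | a. \<forall>j. a j \<in> D}"

definition Dec :: "real \<Rightarrow> nat \<Rightarrow> nat set \<Rightarrow> nat \<Rightarrow> real" where
  "Dec p n D i = Inf {K. 0 \<le> K \<and>
     (\<forall>G :: real \<Rightarrow> pt \<Rightarrow> complex.
        (\<forall>s\<in>Cset n D i. fourier_supported p (G s) (theta s (1 / real n ^ i) (1 / real n ^ (2 * i)))) \<longrightarrow>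
        Lp_norm p (\<lambda>x. \<Sum>s\<in>Cset n D i. G s x)
          \<le> K * sqrt (\<Sum>s\<in>Cset n D i. (Lp_norm p (G s))\<^sup>2))}"

end

theory Submission
  imports Defs
begin

(* C_i consists of the points m / n^i where m runs over the numbers with i base-n digits from D.
   Sorting them by their last digit d splits C_(i+1) into k blocks, each a copy of C_i dilated
   by 1/n and shifted by d / n^(i+1). Counting digit strings shows that a block has about
   (r n^(i+1))^alpha points in any interval of length r around one of its points, because
   n^alpha = k; so every block is (alpha, n^(i+1), 4 k^2)-AD regular. Theorem 1.1 at scale
   R = n^(2(i+1)) decouples each block with constant R^(epsilon alpha / 2) (k^i)^(1/2 - 3/p - c),
   and the k blocks are recombined by the triangle and Hoelder inequalities at the price of the
   factor k^(1 + 1/p), which does not depend on i. *)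

section \<open>Base-n expansions with digits in D\<close>

fun digit_numbers :: "nat \<Rightarrow> nat set \<Rightarrow> nat \<Rightarrow> nat set" where
  "digit_numbers n D 0 = {0}"
| "digit_numbers n D (Suc i) = (\<lambda>(m, d). n * m + d) ` (digit_numbers n D i \<times> D)"

fun digits_value :: "nat \<Rightarrow> (nat \<Rightarrow> nat) \<Rightarrow> nat \<Rightarrow> nat" where
  "digits_value n a 0 = 0"
| "digits_value n a (Suc i) = n * digits_value n a i + a (Suc i)"

lemma finite_digit_numbers [simp]: "finite D \<Longrightarrow> finite (digit_numbers n D i)"
  by (induction i) auto

lemma inj_on_append_digit:
  fixes n :: nat
  assumes "D \<subseteq> {0..<n}"
  shows "inj_on (\<lambda>(m, d). n * m + d) (X \<times> D)"
proof (rule inj_onI, clarsimp)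
  fix m d m' d' assume "d \<in> D" "d' \<in> D" and eq: "n * m + d = n * m' + d'"
  then have "d < n" "d' < n" using assms by auto
  then have "d = d'" using arg_cong[OF eq, of "\<lambda>x. x mod n"] by simp
  then show "m = m' \<and> d = d'" using eq \<open>d < n\<close> by simp
qed

lemma card_digit_numbers:
  assumes "D \<subseteq> {0..<n}" "finite D"
  shows "card (digit_numbers n D i) = card D ^ i"
  by (induction i) (simp_all add: card_image[OF inj_on_append_digit[OF assms(1)]] card_cartesian_product)

lemma digit_numbers_less_power:
  assumes "D \<subseteq> {0..<n}" "m \<in> digit_numbers n D i"
  shows "m < n ^ i"
  using assms(2)
proof (induction i arbitrary: m)
  case 0 then show ?case by simp
next
  case (Suc i)
  then obtain m' d where m: "m = n * m' + d" "m' \<in> digit_numbers n D i" "d \<in> D" by auto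
  have "n * (m' + 1) \<le> n * n ^ i" using Suc.IH[OF m(2)] by (intro mult_le_mono2) simp
  moreover have "d < n" using assms(1) m(3) by auto
  ultimately show ?case using m(1) by (simp add: algebra_simps)
qed

lemma digits_value_cong: "(\<And>j. 1 \<le> j \<Longrightarrow> j \<le> i \<Longrightarrow> a j = b j) \<Longrightarrow> digits_value n a i = digits_value n b i"
  by (induction i) auto

lemma digits_value_in_digit_numbers: "(\<And>j. a j \<in> D) \<Longrightarrow> digits_value n a i \<in> digit_numbers n D i"
  by (induction i) (auto intro!: image_eqI)

lemma digit_numbers_obtain_digits:
  assumes "D \<noteq> {}" "m \<in> digit_numbers n D i"
  obtains a where "\<And>j. a j \<in> D" "digits_value n a i = m"
  using assms(2)
proof (induction i arbitrary: m thesis)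
  case 0
  obtain d where "d \<in> D" using assms(1) by auto
  then show ?case using 0 by (intro "0.prems"(1)[of "\<lambda>_. d"]) auto
next
  case (Suc i)
  then obtain m' d where m: "m = n * m' + d" "m' \<in> digit_numbers n D i" "d \<in> D" by auto
  obtain a where a: "\<And>j. a j \<in> D" "digits_value n a i = m'" using Suc.IH m(2) by blast
  have prefix: "digits_value n (a(Suc i := d)) i = digits_value n a i" by (rule digits_value_cong) simp
  have "digits_value n (a(Suc i := d)) (Suc i) = m"
    unfolding digits_value.simps prefix using a(2) m(1) by simp
  moreover have "\<And>j. (a(Suc i := d)) j \<in> D" using a(1) m(3) by simp
  ultimately show ?case using Suc.prems(1) by blast
qed

lemma sum_digits_eq_digits_value:
  assumes "n > 0"
  shows "(\<Sum>j=1..i. real (a j) / real n ^ j) = real (digits_value n a i) / real n ^ i"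
  by (induction i) (use assms in \<open>simp_all add: field_simps\<close>)

lemma Cset_eq_digit_numbers:
  assumes "n > 0" "D \<noteq> {}"
  shows "Cset n D i = (\<lambda>m. real m / real n ^ i) ` digit_numbers n D i"
proof (intro equalityI subsetI)
  fix x assume "x \<in> Cset n D i"
  then obtain a where "\<And>j. a j \<in> D" "x = real (digits_value n a i) / real n ^ i"
    unfolding Cset_def sum_digits_eq_digits_value[OF assms(1)] by blast
  then show "x \<in> (\<lambda>m. real m / real n ^ i) ` digit_numbers n D i"
    using digits_value_in_digit_numbers by blast
next
  fix x assume "x \<in> (\<lambda>m. real m / real n ^ i) ` digit_numbers n D i"
  then obtain m where m: "m \<in> digit_numbers n D i" "x = real m / real n ^ i" by auto
  obtain a where "\<And>j. a j \<in> D" "digits_value n a i = m"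
    using digit_numbers_obtain_digits[OF assms(2) m(1)] by blast
  then show "x \<in> Cset n D i"
    unfolding Cset_def sum_digits_eq_digits_value[OF assms(1)] using m(2) by blast
qed

lemma div_power_append_digit:
  fixes n m d :: nat
  assumes "d < n"
  shows "(n * m + d) div (n * n ^ j) = m div n ^ j"
proof -
  have "(n * m + d) div n = m" using assms by simp
  then show ?thesis by (simp add: div_mult2_eq)
qed

lemma card_digit_numbers_prefix_le:
  assumes "D \<subseteq> {0..<n}" "finite D" "D \<noteq> {}"
  shows "card {m \<in> digit_numbers n D i. m div n ^ j = q} \<le> card D ^ j"
proof (induction i arbitrary: j q)
  case 0
  have "card {m \<in> digit_numbers n D 0. m div n ^ j = q} \<le> card {0::nat}"
    by (rule card_mono) auto
  also have "\<dots> \<le> card D ^ j"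
    using assms by (simp add: Suc_leI card_gt_0_iff one_le_power)
  finally show ?case .
next
  case (Suc i)
  show ?case
  proof (cases j)
    case 0
    have "card {m \<in> digit_numbers n D (Suc i). m div n ^ j = q} \<le> card {q}"
      by (rule card_mono) (auto simp: 0)
    then show ?thesis by (simp add: 0)
  next
    case (Suc j')
    let ?P = "{m \<in> digit_numbers n D i. m div n ^ j' = q}"
    have "{m \<in> digit_numbers n D (Suc i). m div n ^ j = q} \<subseteq> (\<lambda>(m, d). n * m + d) ` (?P \<times> D)"
    proof
      fix x assume "x \<in> {m \<in> digit_numbers n D (Suc i). m div n ^ j = q}"
      then obtain m d where x: "x = n * m + d" "m \<in> digit_numbers n D i" "d \<in> D" "x div n ^ j = q"
        by auto
      moreover have "d < n" using assms(1) x(3) by auto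
      ultimately show "x \<in> (\<lambda>(m, d). n * m + d) ` (?P \<times> D)"
        by (force simp: Suc div_power_append_digit)
    qed
    then have "card {m \<in> digit_numbers n D (Suc i). m div n ^ j = q} \<le> card ((\<lambda>(m, d). n * m + d) ` (?P \<times> D))"
      using assms(2) by (intro card_mono) auto
    also have "\<dots> \<le> card ?P * card D"
      using card_image_le[of "?P \<times> D" "\<lambda>(m, d). n * m + d"] assms(2)
      by (simp add: card_cartesian_product)
    also have "\<dots> \<le> card D ^ j' * card D" using Suc.IH by simp
    finally show ?thesis by (simp add: Suc mult.commute)
  qed
qed

lemma card_digit_numbers_prefix_ge:
  assumes "D \<subseteq> {0..<n}" "finite D" "m0 \<in> digit_numbers n D i" "j \<le> i"
  shows "card D ^ j \<le> card {m \<in> digit_numbers n D i. m div n ^ j = m0 div n ^ j}"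
  using assms(3,4)
proof (induction i arbitrary: j m0)
  case 0
  then have "{m \<in> digit_numbers n D 0. m div n ^ j = m0 div n ^ j} = {0}" by auto
  then show ?case using 0 by simp
next
  case (Suc i)
  have fin: "finite {m \<in> digit_numbers n D (Suc i). m div n ^ j = m0 div n ^ j}"
    using assms(2) by simp
  show ?case
  proof (cases j)
    case 0
    then show ?thesis using fin Suc.prems(1) by (auto simp: Suc_le_eq card_gt_0_iff)
  next
    case (Suc j')
    obtain m0' d0 where m0: "m0 = n * m0' + d0" "m0' \<in> digit_numbers n D i" "d0 \<in> D"
      using Suc.prems(1) by auto
    let ?P = "{m \<in> digit_numbers n D i. m div n ^ j' = m0' div n ^ j'}"
    have "d0 < n" using assms(1) m0(3) by auto
    have sub: "(\<lambda>(m, d). n * m + d) ` (?P \<times> D) \<subseteq> {m \<in> digit_numbers n D (Suc i). m div n ^ j = m0 div n ^ j}"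
    proof
      fix x assume "x \<in> (\<lambda>(m, d). n * m + d) ` (?P \<times> D)"
      then obtain m d where x: "x = n * m + d" "m \<in> ?P" "d \<in> D" by auto
      moreover have "d < n" using assms(1) x(3) by auto
      ultimately show "x \<in> {m \<in> digit_numbers n D (Suc i). m div n ^ j = m0 div n ^ j}"
        using m0(1) \<open>d0 < n\<close> by (auto simp: Suc div_power_append_digit)
    qed
    have "card D ^ j = card D ^ j' * card D" by (simp add: Suc)
    also have "\<dots> \<le> card ?P * card D" using Suc.IH[OF m0(2)] Suc.prems(2) Suc by simp
    also have "\<dots> = card ((\<lambda>(m, d). n * m + d) ` (?P \<times> D))"
      by (simp add: card_image[OF inj_on_append_digit[OF assms(1)]] card_cartesian_product)
    also have "\<dots> \<le> card {m \<in> digit_numbers n D (Suc i). m div n ^ j = m0 div n ^ j}"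
      by (rule card_mono[OF fin sub])
    finally show ?thesis .
  qed
qed

lemma card_digit_numbers_in_interval_le:
  assumes "D \<subseteq> {0..<n}" "finite D" "D \<noteq> {}" "0 \<le> L" "L < real n ^ j"
  shows "card {m \<in> digit_numbers n D i. u \<le> real m \<and> real m \<le> u + L} \<le> 2 * card D ^ j"
proof -
  define q where "q = nat \<lceil>u\<rceil> div n ^ j"
  have "n ^ j > 0" using assms(4,5) by (cases "n = 0") (auto simp: power_0_left split: if_splits)
  have "m div n ^ j \<in> {q, Suc q}" if "u \<le> real m" "real m \<le> u + L" for m
  proof -
    have "nat \<lceil>u\<rceil> \<le> m" using that(1) by (simp add: ceiling_le nat_le_iff)
    moreover have "real m \<le> real (nat \<lceil>u\<rceil> + n ^ j)" using that(2) assms(5) by simp linarith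
    then have "m \<le> nat \<lceil>u\<rceil> + n ^ j" by (simp only: of_nat_le_iff)
    ultimately have "q \<le> m div n ^ j" "m div n ^ j \<le> (nat \<lceil>u\<rceil> + n ^ j) div n ^ j"
      unfolding q_def by (auto intro: div_le_mono)
    moreover have "(nat \<lceil>u\<rceil> + n ^ j) div n ^ j = Suc q" using \<open>n ^ j > 0\<close> by (simp add: q_def)
    ultimately show ?thesis by auto
  qed
  then have "{m \<in> digit_numbers n D i. u \<le> real m \<and> real m \<le> u + L} \<subseteq>
      {m \<in> digit_numbers n D i. m div n ^ j = q} \<union> {m \<in> digit_numbers n D i. m div n ^ j = Suc q}"
    by blast
  then have "card {m \<in> digit_numbers n D i. u \<le> real m \<and> real m \<le> u + L}
     \<le> card {m \<in> digit_numbers n D i. m div n ^ j = q} + card {m \<in> digit_numbers n D i. m div n ^ j = Suc q}"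
    using assms(2) by (intro order_trans[OF card_mono card_Un_le]) auto
  also have "\<dots> \<le> 2 * card D ^ j"
    using card_digit_numbers_prefix_le[OF assms(1-3)] by (simp add: mult_2 add_mono)
  finally show ?thesis .
qed

lemma ex_power_bracket:
  fixes b :: nat and L :: real
  assumes "2 \<le> b" "1 \<le> L"
  obtains E where "real b ^ E \<le> L" "L < real b ^ Suc E"
proof -
  have "1 \<le> nat \<lfloor>L\<rfloor>" using assms(2) by (simp add: le_nat_iff)
  then obtain E where E: "b ^ E \<le> nat \<lfloor>L\<rfloor>" "nat \<lfloor>L\<rfloor> < b ^ Suc E"
    using ex_power_ivl1[OF assms(1), of "nat \<lfloor>L\<rfloor>"] by auto
  have "real (b ^ E) \<le> L" "L < real (b ^ Suc E)"
    using E assms(2) by linarith+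
  then show ?thesis using that by simp
qed

lemma append_digit_div_bounds:
  fixes n m d j :: nat
  assumes "d < n"
  shows "m div n ^ j * n ^ Suc j \<le> n * m + d" "n * m + d + 1 \<le> m div n ^ j * n ^ Suc j + n ^ Suc j"
proof -
  have "n > 0" using assms by simp
  then have "m mod n ^ j < n ^ j" by simp
  then have lower: "m div n ^ j * n ^ j \<le> m" and upper: "m + 1 \<le> m div n ^ j * n ^ j + n ^ j"
    using div_mult_mod_eq[of m "n ^ j"] by linarith+
  have "m div n ^ j * n ^ Suc j = n * (m div n ^ j * n ^ j)" by simp
  also have "\<dots> \<le> n * m" using lower by (rule mult_le_mono2)
  finally show "m div n ^ j * n ^ Suc j \<le> n * m + d" by (rule trans_le_add1)
  have "n * m + d + 1 \<le> n * (m + 1)" using assms by simp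
  also have "\<dots> \<le> n * (m div n ^ j * n ^ j + n ^ j)" using upper by (rule mult_le_mono2)
  finally show "n * m + d + 1 \<le> m div n ^ j * n ^ Suc j + n ^ Suc j" by (simp add: algebra_simps)
qed

section \<open>AD regularity of rescaled sets of integers\<close>

definition window :: "nat set \<Rightarrow> real \<Rightarrow> real \<Rightarrow> nat set" where
  "window M X \<rho> = {m \<in> M. X - \<rho> \<le> real m \<and> real m + 1 \<le> X + \<rho>}"

lemma finite_window: "finite M \<Longrightarrow> finite (window M X \<rho>)"
  unfolding window_def by simp

lemma unit_interval_subset_iff_scaled:
  fixes R a x r :: real
  assumes "0 < R"
  shows "{a / R..a / R + 1 / R} \<subseteq> {x - r..x + r} \<longleftrightarrow> x * R - r * R \<le> a \<and> a + 1 \<le> x * R + r * R"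
proof -
  have "{a / R..a / R + 1 / R} \<subseteq> {x - r..x + r} \<longleftrightarrow> x - r \<le> a / R \<and> a / R + 1 / R \<le> x + r"
    using assms by (simp add: atLeastatMost_subset_iff)
  also have "\<dots> \<longleftrightarrow> x * R - r * R \<le> a \<and> a + 1 \<le> x * R + r * R"
    using assms by (simp add: field_simps)
  finally show ?thesis .
qed

lemma ad_regular_scaled_nat_set:
  fixes M :: "nat set" and R C \<alpha> :: real
  assumes R: "0 < R"
    and bounded: "\<And>m. m \<in> M \<Longrightarrow> real m + 1 \<le> R"
    and separated: "\<And>m m'. m \<in> M \<Longrightarrow> m' \<in> M \<Longrightarrow> m < m' \<Longrightarrow> m + 1 < m'"
    and counts: "\<And>m X \<rho>. m \<in> M \<Longrightarrow> real m \<le> X \<Longrightarrow> X \<le> real m + 1 \<Longrightarrow> 1 \<le> \<rho> \<Longrightarrow> \<rho> \<le> 2 * R \<Longrightarrow>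
       inverse C * (2 * \<rho>) powr \<alpha> \<le> real (card (window M X \<rho>)) \<and>
       real (card (window M X \<rho>)) \<le> C * (2 * \<rho>) powr \<alpha>"
  shows "ad_regular \<alpha> R C ((\<lambda>m. real m / R) ` M)"
proof -
  let ?f = "\<lambda>m::nat. real m / R"
  have inside: "-1 \<le> a \<and> a + 1 / R \<le> 1" if a: "a \<in> ?f ` M" for a
  proof -
    obtain m where m: "m \<in> M" "a = ?f m" using a by auto
    then have "0 \<le> a" "a + 1 / R = (real m + 1) / R" using R by (simp_all add: add_divide_distrib)
    then show ?thesis using bounded[OF m(1)] R by simp
  qed
  have disjoint: "{a..a + 1 / R} \<inter> {b..b + 1 / R} = {}" if ab: "a \<in> ?f ` M" "b \<in> ?f ` M" "a \<noteq> b" for a b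
  proof -
    obtain m m' where m: "m \<in> M" "m' \<in> M" "a = ?f m" "b = ?f m'" using ab(1,2) by auto
    then have "m < m' \<or> m' < m" using ab(3) by auto
    then have "real m + 1 < real m' \<or> real m' + 1 < real m" using separated m(1,2) by fastforce
    then have "a + 1 / R < b \<or> b + 1 / R < a" using R m(3,4) by (auto simp: field_simps)
    then show ?thesis by auto
  qed
  have regular: "inverse C * (2 * r * R) powr \<alpha> \<le> N \<and> N \<le> C * (2 * r * R) powr \<alpha>"
    if x: "x \<in> (\<Union>a\<in>?f ` M. {a..a + 1 / R})" and r: "2 / R \<le> 2 * r" "2 * r \<le> 4"
      and N: "N = real (card {a \<in> ?f ` M. {a..a + 1 / R} \<subseteq> {x - r..x + r}})" for x r N
  proof -
    obtain m where m: "m \<in> M" "?f m \<le> x" "x \<le> ?f m + 1 / R" using x by auto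
    then have X: "real m \<le> x * R" "x * R \<le> real m + 1" using R by (auto simp: field_simps)
    have \<rho>: "1 \<le> r * R" "r * R \<le> 2 * R" using r R by (auto simp: field_simps)
    have "{a \<in> ?f ` M. {a..a + 1 / R} \<subseteq> {x - r..x + r}} = ?f ` window M (x * R) (r * R)"
      using unit_interval_subset_iff_scaled[OF R] by (auto simp: window_def)
    moreover have "inj_on ?f (window M (x * R) (r * R))" using R by (auto intro: inj_onI)
    ultimately have "N = real (card (window M (x * R) (r * R)))" using N by (simp add: card_image)
    then show ?thesis using counts[OF m(1) X \<rho>] by (simp add: mult.assoc)
  qed
  show ?thesis unfolding ad_regular_def Let_def using inside disjoint regular by blast
qed

section \<open>Decoupling\<close>

lemma norm_sum_powr_le:
  fixes f :: "'i \<Rightarrow> 'a::real_normed_vector"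
  assumes "finite I" "0 < p"
  shows "norm (\<Sum>i\<in>I. f i) powr p \<le> real (card I) powr p * (\<Sum>i\<in>I. norm (f i) powr p)"
proof -
  define T where "T = (\<Sum>i\<in>I. norm (f i) powr p)"
  have "norm (f i) \<le> T powr (1 / p)" if "i \<in> I" for i
  proof -
    have "norm (f i) powr p \<le> T"
      unfolding T_def using member_le_sum[OF that, of "\<lambda>i. norm (f i) powr p"] assms(1) by simp
    then have "(norm (f i) powr p) powr (1 / p) \<le> T powr (1 / p)" using assms(2) by (intro powr_mono2) auto
    then show ?thesis using assms(2) by (simp add: powr_powr)
  qed
  then have "norm (\<Sum>i\<in>I. f i) \<le> real (card I) * T powr (1 / p)"
    using norm_sum[of f I] sum_mono[of I "\<lambda>i. norm (f i)" "\<lambda>_. T powr (1 / p)"] by simp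
  then have "norm (\<Sum>i\<in>I. f i) powr p \<le> (real (card I) * T powr (1 / p)) powr p"
    using assms(2) by (intro powr_mono2) auto
  also have "\<dots> = real (card I) powr p * T"
    using assms(2) by (simp add: powr_mult powr_powr T_def sum_nonneg)
  finally show ?thesis unfolding T_def .
qed

lemma integral_norm_powr_le_of_Lp_norm_le:
  assumes "0 < p" "Lp_norm p F \<le> B"
  shows "integral\<^sup>L lborel (\<lambda>x. norm (F x) powr p) \<le> B powr p"
proof -
  define J where "J = integral\<^sup>L lborel (\<lambda>x. norm (F x) powr p)"
  have "0 \<le> J" unfolding J_def by (rule Bochner_Integration.integral_nonneg) simp
  then have "J = (J powr (1 / p)) powr p" using assms(1) by (simp add: powr_powr)
  also have "\<dots> \<le> B powr p"
    using assms \<open>0 \<le> J\<close> unfolding Lp_norm_def J_def[symmetric] by (intro powr_mono2) auto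
  finally show ?thesis unfolding J_def .
qed

lemma integrable_norm_sum_powr:
  fixes F :: "'i \<Rightarrow> pt \<Rightarrow> complex"
  assumes "finite I" "0 < p"
    and "\<And>i. i \<in> I \<Longrightarrow> integrable lborel (F i)"
    and "\<And>i. i \<in> I \<Longrightarrow> integrable lborel (\<lambda>x. norm (F i x) powr p)"
  shows "integrable lborel (\<lambda>x. norm (\<Sum>i\<in>I. F i x) powr p)"
proof (rule Bochner_Integration.integrable_bound)
  show "integrable lborel (\<lambda>x. real (card I) powr p * (\<Sum>i\<in>I. norm (F i x) powr p))"
    using assms(4) by (intro integrable_mult_right integrable_sum) auto
  have "(\<lambda>x. \<Sum>i\<in>I. F i x) \<in> borel_measurable lborel"
    using assms(3) by (intro borel_measurable_integrable integrable_sum) auto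
  then show "(\<lambda>x. norm (\<Sum>i\<in>I. F i x) powr p) \<in> borel_measurable lborel" by measurable
  show "AE x in lborel. norm (norm (\<Sum>i\<in>I. F i x) powr p)
      \<le> norm (real (card I) powr p * (\<Sum>i\<in>I. norm (F i x) powr p))"
  proof (rule AE_I2)
    fix x
    show "norm (norm (\<Sum>i\<in>I. F i x) powr p) \<le> norm (real (card I) powr p * (\<Sum>i\<in>I. norm (F i x) powr p))"
      using norm_sum_powr_le[OF assms(1,2), of "\<lambda>i. F i x"] by (simp add: sum_nonneg)
  qed
qed

lemma Lp_norm_sum_le:
  fixes F :: "'i \<Rightarrow> pt \<Rightarrow> complex"
  assumes "finite I" "0 < p" "0 \<le> B"
    and "\<And>i. i \<in> I \<Longrightarrow> integrable lborel (F i)"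
    and "\<And>i. i \<in> I \<Longrightarrow> integrable lborel (\<lambda>x. norm (F i x) powr p)"
    and "\<And>i. i \<in> I \<Longrightarrow> Lp_norm p (F i) \<le> B"
  shows "Lp_norm p (\<lambda>x. \<Sum>i\<in>I. F i x) \<le> real (card I) powr (1 + 1 / p) * B"
proof -
  define c where "c = real (card I)"
  have "integral\<^sup>L lborel (\<lambda>x. norm (\<Sum>i\<in>I. F i x) powr p)
      \<le> integral\<^sup>L lborel (\<lambda>x. c powr p * (\<Sum>i\<in>I. norm (F i x) powr p))"
    unfolding c_def using assms(5) norm_sum_powr_le[OF assms(1,2)]
    by (intro integral_mono integrable_norm_sum_powr[OF assms(1,2,4,5)] integrable_mult_right integrable_sum) auto
  also have "\<dots> = c powr p * (\<Sum>i\<in>I. integral\<^sup>L lborel (\<lambda>x. norm (F i x) powr p))"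
    using assms(5) by (simp add: integral_sum)
  also have "\<dots> \<le> c powr p * (c * B powr p)"
    using integral_norm_powr_le_of_Lp_norm_le[OF assms(2,6)] sum_mono[of I _ "\<lambda>_. B powr p"]
    unfolding c_def by (intro mult_left_mono) auto
  finally have "Lp_norm p (\<lambda>x. \<Sum>i\<in>I. F i x) \<le> (c powr p * (c * B powr p)) powr (1 / p)"
    unfolding Lp_norm_def using assms(2) by (intro powr_mono2) (auto intro: Bochner_Integration.integral_nonneg)
  also have "\<dots> = c * c powr (1 / p) * B"
    using assms(2,3) by (simp add: c_def powr_mult powr_powr)
  also have "\<dots> = c powr (1 + 1 / p) * B"
    by (cases "c = 0") (simp_all add: c_def powr_add)
  finally show ?thesis unfolding c_def .
qed

definition ad_decoupling_bound :: "real \<Rightarrow> real \<Rightarrow> real \<Rightarrow> real \<Rightarrow> real \<Rightarrow> real \<Rightarrow> bool" where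
  "ad_decoupling_bound \<alpha> p \<gamma> C \<delta> K \<longleftrightarrow>
     (\<forall>R \<ge> 1. \<forall>A. ad_regular \<alpha> (sqrt R) C A \<longrightarrow>
        (\<forall>G :: real \<Rightarrow> pt \<Rightarrow> complex.
           (\<forall>a\<in>A. fourier_supported p (G a) (theta a (1 / sqrt R) (1 / R))) \<longrightarrow>
           Lp_norm p (\<lambda>x. \<Sum>a\<in>A. G a x)
             \<le> K * R powr \<delta> * real (card A) powr \<gamma> * sqrt (\<Sum>a\<in>A. (Lp_norm p (G a))\<^sup>2)))"

lemma thm11_holds_obtain_bound:
  assumes "thm11_holds \<alpha> p c" "1 \<le> C" "0 < \<delta>"
  obtains K where "0 \<le> K" "ad_decoupling_bound \<alpha> p (1/2 - 3/p - c) C \<delta> K"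
proof -
  obtain K where K: "ad_decoupling_bound \<alpha> p (1/2 - 3/p - c) C \<delta> K"
    using assms unfolding thm11_holds_def ad_decoupling_bound_def by blast
  have "ad_decoupling_bound \<alpha> p (1/2 - 3/p - c) C \<delta> (max K 0)"
    unfolding ad_decoupling_bound_def
  proof (intro allI impI)
    fix R A G assume "1 \<le> R" "ad_regular \<alpha> (sqrt R) C A"
      "\<forall>a\<in>A. fourier_supported p (G a) (theta a (1 / sqrt R) (1 / R))"
    then have "Lp_norm p (\<lambda>x. \<Sum>a\<in>A. G a x)
        \<le> K * (R powr \<delta> * real (card A) powr (1/2 - 3/p - c) * sqrt (\<Sum>a\<in>A. (Lp_norm p (G a))\<^sup>2))"
      using K unfolding ad_decoupling_bound_def by (simp add: mult.assoc)
    also have "\<dots> \<le> max K 0 * (R powr \<delta> * real (card A) powr (1/2 - 3/p - c) * sqrt (\<Sum>a\<in>A. (Lp_norm p (G a))\<^sup>2))"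
      by (intro mult_right_mono mult_nonneg_nonneg) (simp_all add: sum_nonneg)
    finally show "Lp_norm p (\<lambda>x. \<Sum>a\<in>A. G a x)
        \<le> max K 0 * R powr \<delta> * real (card A) powr (1/2 - 3/p - c) * sqrt (\<Sum>a\<in>A. (Lp_norm p (G a))\<^sup>2)"
      by (simp add: mult.assoc)
  qed
  then show ?thesis by (intro that[of "max K 0"]) auto
qed

lemma ad_decoupling_boundD:
  assumes "ad_decoupling_bound \<alpha> p \<gamma> C \<delta> K" "1 \<le> R" "ad_regular \<alpha> (sqrt R) C A"
    and "\<forall>a\<in>A. fourier_supported p (G a) (theta a (1 / sqrt R) (1 / R))"
  shows "Lp_norm p (\<lambda>x. \<Sum>a\<in>A. G a x) \<le> K * R powr \<delta> * real (card A) powr \<gamma> * sqrt (\<Sum>a\<in>A. (Lp_norm p (G a))\<^sup>2)"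
  using assms unfolding ad_decoupling_bound_def by blast

lemma Dec_le:
  assumes "0 \<le> K"
    and "\<And>G. \<forall>s\<in>Cset n D i. fourier_supported p (G s) (theta s (1 / real n ^ i) (1 / real n ^ (2 * i))) \<Longrightarrow>
      Lp_norm p (\<lambda>x. \<Sum>s\<in>Cset n D i. G s x) \<le> K * sqrt (\<Sum>s\<in>Cset n D i. (Lp_norm p (G s))\<^sup>2)"
  shows "Dec p n D i \<le> K"
  unfolding Dec_def using assms by (intro cInf_lower bdd_belowI[of _ 0]) auto

section \<open>The last-digit blocks of C_(i+1)\<close>

locale cantor_digit_set =
  fixes n k :: nat and D :: "nat set" and \<alpha> :: real
  assumes digits: "D \<subseteq> {0..<n}" and card_D: "card D = k"
    and two_le_k: "2 \<le> k" and k_less_n: "k < n"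
    and alpha_def: "\<alpha> = ln (real k) / ln (real n)"
begin

lemma finite_D: "finite D"
  using digits finite_subset by blast

lemma D_nonempty: "D \<noteq> {}"
  using card_D two_le_k by auto

lemma two_le_n: "2 \<le> n"
  using two_le_k k_less_n by linarith

lemma alpha_pos: "0 < \<alpha>"
  unfolding alpha_def using two_le_k two_le_n by (simp add: divide_pos_pos)

lemma alpha_le_1: "\<alpha> \<le> 1"
  unfolding alpha_def using two_le_k k_less_n by simp

lemma power_n_powr_alpha: "(real n ^ j) powr \<alpha> = real k ^ j"
proof -
  have "(real n ^ j) powr \<alpha> = exp (real j * ln (real k))"
    using two_le_n by (simp add: powr_def ln_realpow alpha_def)
  also have "\<dots> = real k powr real j"
    using two_le_k by (simp add: powr_def)
  also have "\<dots> = real k ^ j"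
    using two_le_k by (simp add: powr_realpow)
  finally show ?thesis .
qed

lemma power_double_n_powr_half_alpha: "(real n ^ (2 * j)) powr (\<epsilon> * \<alpha> / 2) = real k powr (real j * \<epsilon>)"
proof -
  have "(real n ^ (2 * j)) powr (\<epsilon> * \<alpha> / 2) = ((real n ^ (2 * j)) powr \<alpha>) powr (\<epsilon> / 2)"
    by (simp add: powr_powr mult.commute)
  also have "\<dots> = (real k powr real (2 * j)) powr (\<epsilon> / 2)"
    unfolding power_n_powr_alpha using two_le_k by (simp only: powr_realpow)
  also have "\<dots> = real k powr (real j * \<epsilon>)"
  proof -
    have "real (2 * j) * (\<epsilon> / 2) = real j * \<epsilon>" by simp
    then show ?thesis by (simp only: powr_powr)
  qed
  finally show ?thesis .
qed

lemma scaled_power_n_powr_alpha_le: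
  assumes "1 \<le> c"
  shows "(c * real n ^ j) powr \<alpha> \<le> c * real k ^ j"
proof -
  have "c powr \<alpha> \<le> c powr 1" using assms alpha_le_1 by (intro powr_mono) auto
  then show ?thesis using assms by (simp add: powr_mult power_n_powr_alpha mult_right_mono)
qed

lemma card_digit_numbers_in_interval_powr_le:
  assumes "0 \<le> L"
  shows "real (card {m \<in> digit_numbers n D i. u \<le> real m \<and> real m \<le> u + L}) \<le> 2 * real k * max 1 L powr \<alpha>"
proof (cases "L < 1")
  case True
  have "card {m \<in> digit_numbers n D i. u \<le> real m \<and> real m \<le> u + L} \<le> 2 * card D ^ 0"
    using True by (intro card_digit_numbers_in_interval_le[OF digits finite_D D_nonempty assms]) simp
  then show ?thesis using True two_le_k by simp
next
  case False
  then obtain E where E: "real n ^ E \<le> L" "L < real n ^ Suc E"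
    using ex_power_bracket[OF two_le_n, of L] by force
  have "real (card {m \<in> digit_numbers n D i. u \<le> real m \<and> real m \<le> u + L}) \<le> real (2 * card D ^ Suc E)"
    by (intro of_nat_mono card_digit_numbers_in_interval_le[OF digits finite_D D_nonempty assms E(2)])
  also have "\<dots> = 2 * real k * (real n ^ E) powr \<alpha>"
    by (simp add: card_D power_n_powr_alpha)
  also have "\<dots> \<le> 2 * real k * max 1 L powr \<alpha>"
    using E(1) alpha_pos by (intro mult_left_mono powr_mono2) auto
  finally show ?thesis .
qed

lemma two_k_le_four_k_squared: "2 * real k \<le> 4 * real k ^ 2"
proof -
  have "2 * k \<le> 4 * k ^ 2" by (simp add: power2_eq_square le_square)
  then show ?thesis by (simp only: of_nat_le_iff[symmetric, where 'a=real]) simp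
qed

(* Splitting by the last digit is forced by ad_regular, which asks for pairwise disjoint closed
   intervals: the intervals of C_(i+1) belonging to two consecutive digits touch. *)
definition last_digit_block :: "nat \<Rightarrow> nat \<Rightarrow> nat set" where
  "last_digit_block d i = (\<lambda>m. n * m + d) ` digit_numbers n D i"

lemma finite_last_digit_block: "finite (last_digit_block d i)"
  unfolding last_digit_block_def using finite_D by simp

lemma card_window_last_digit_block_le:
  assumes "d \<in> D" "1 \<le> \<rho>"
  shows "real (card (window (last_digit_block d i) X \<rho>)) \<le> 4 * real k ^ 2 * (2 * \<rho>) powr \<alpha>"
proof -
  define u where "u = (X - \<rho> - real d) / real n"
  define L where "L = 2 * \<rho> / real n"
  let ?S = "{m \<in> digit_numbers n D i. u \<le> real m \<and> real m \<le> u + L}"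
  have n: "1 \<le> real n" using two_le_n by simp
  have "window (last_digit_block d i) X \<rho> \<subseteq> (\<lambda>m. n * m + d) ` ?S"
  proof
    fix x assume "x \<in> window (last_digit_block d i) X \<rho>"
    then have "x \<in> last_digit_block d i" and x: "X - \<rho> \<le> real x" "real x + 1 \<le> X + \<rho>"
      unfolding window_def by auto
    then obtain m where m: "x = n * m + d" "m \<in> digit_numbers n D i"
      unfolding last_digit_block_def by auto
    have "u + L = (X + \<rho> - real d) / real n" using n by (simp add: u_def L_def field_simps)
    then have "u \<le> real m" "real m \<le> u + L"
      using n x unfolding u_def m(1) by (simp_all add: pos_divide_le_eq pos_le_divide_eq mult.commute)
    then show "x \<in> (\<lambda>m. n * m + d) ` ?S" using m by blast
  qed
  then have "card (window (last_digit_block d i) X \<rho>) \<le> card ((\<lambda>m. n * m + d) ` ?S)"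
    using finite_D by (intro card_mono) auto
  also have "\<dots> \<le> card ?S" by (rule card_image_le) (simp add: finite_D)
  finally have "card (window (last_digit_block d i) X \<rho>) \<le> card ?S" .
  then have "real (card (window (last_digit_block d i) X \<rho>)) \<le> real (card ?S)"
    by (rule of_nat_mono)
  also have "\<dots> \<le> 2 * real k * max 1 L powr \<alpha>"
    using assms(2) by (intro card_digit_numbers_in_interval_powr_le) (simp add: L_def)
  also have "\<dots> \<le> 2 * real k * (2 * \<rho>) powr \<alpha>"
  proof -
    have "L \<le> 2 * \<rho> / 1" unfolding L_def using n assms(2) by (intro divide_left_mono) auto
    then have "max 1 L \<le> 2 * \<rho>" using assms(2) by simp
    then show ?thesis using alpha_pos by (intro mult_left_mono powr_mono2) auto
  qed
  also have "\<dots> \<le> 4 * real k ^ 2 * (2 * \<rho>) powr \<alpha>"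
    using two_k_le_four_k_squared by (rule mult_right_mono) simp
  finally show ?thesis .
qed

lemma card_window_last_digit_block_prefix_ge:
  assumes "d \<in> D" "m0 \<in> digit_numbers n D i" "j \<le> i"
    and X: "real (n * m0 + d) \<le> X" "X \<le> real (n * m0 + d) + 1"
    and "real n ^ Suc j \<le> \<rho>"
  shows "k ^ j \<le> card (window (last_digit_block d i) X \<rho>)"
proof -
  let ?Q = "{m \<in> digit_numbers n D i. m div n ^ j = m0 div n ^ j}"
  define q P where "q = m0 div n ^ j" and "P = n ^ Suc j"
  have "d < n" using assms(1) digits by auto
  have bounds: "q * P \<le> n * m + d \<and> n * m + d + 1 \<le> q * P + P" if "m div n ^ j = q" for m
    using append_digit_div_bounds[OF \<open>d < n\<close>, of m j] that unfolding P_def by simp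
  (* the numbers n m + d with m in ?Q fill a run of length P \<le> \<rho> that contains n m0 + d *)
  have sub: "(\<lambda>m. n * m + d) ` ?Q \<subseteq> window (last_digit_block d i) X \<rho>"
  proof
    fix x assume "x \<in> (\<lambda>m. n * m + d) ` ?Q"
    then obtain m where m: "x = n * m + d" "m \<in> digit_numbers n D i" "m div n ^ j = q"
      unfolding q_def by blast
    have "real (q * P) \<le> real x" "real (x + 1) \<le> real (q * P + P)"
      "real (q * P) \<le> real (n * m0 + d)" "real (n * m0 + d + 1) \<le> real (q * P + P)"
      using bounds[OF m(3)] bounds[of m0] m(1) unfolding of_nat_le_iff q_def by auto
    moreover have "real P \<le> \<rho>" using assms(6) unfolding P_def by simp
    ultimately have "X - \<rho> \<le> real x" "real x + 1 \<le> X + \<rho>" using X by auto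
    then show "x \<in> window (last_digit_block d i) X \<rho>"
      unfolding window_def last_digit_block_def using m(1,2) by blast
  qed
  have "k ^ j \<le> card ?Q"
    using card_digit_numbers_prefix_ge[OF digits finite_D assms(2,3)] card_D by simp
  also have "\<dots> = card ((\<lambda>m. n * m + d) ` ?Q)"
    using two_le_n by (intro card_image[symmetric] inj_onI) auto
  also have "\<dots> \<le> card (window (last_digit_block d i) X \<rho>)"
    by (intro card_mono finite_window finite_last_digit_block sub)
  finally show ?thesis .
qed

lemma powr_alpha_le_of_power_bracket:
  assumes "0 \<le> \<rho>" "\<rho> < real n ^ Suc E" "0 < E" "\<rho> \<le> 2 * real n ^ Suc i"
  shows "(2 * \<rho>) powr \<alpha> \<le> 4 * real k ^ 2 * real k ^ min (E - 1) i"
proof (cases "E - 1 \<le> i")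
  case True
  define j where "j = min (E - 1) i"
  then have "Suc E = 2 + j" using True assms(3) by simp
  then have "(2 * \<rho>) powr \<alpha> \<le> (2 * real n ^ (2 + j)) powr \<alpha>"
    using assms(1,2) alpha_pos by (intro powr_mono2) auto
  also have "\<dots> \<le> 2 * real k ^ (2 + j)" by (rule scaled_power_n_powr_alpha_le) simp
  also have "\<dots> = 2 * (real k ^ 2 * real k ^ j)" by (simp only: power_add)
  also have "\<dots> \<le> 4 * real k ^ 2 * real k ^ j" by (simp add: mult.assoc)
  finally show ?thesis unfolding j_def .
next
  case False
  have "(2 * \<rho>) powr \<alpha> \<le> (4 * real n ^ Suc i) powr \<alpha>"
    using assms(1,4) alpha_pos by (intro powr_mono2) auto
  also have "\<dots> \<le> 4 * real k ^ Suc i" by (rule scaled_power_n_powr_alpha_le) simp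
  also have "\<dots> = 4 * (real k * real k ^ i)" by simp
  also have "\<dots> \<le> 4 * (real k ^ 2 * real k ^ i)"
    using two_le_k by (intro mult_left_mono mult_right_mono) (auto simp: power2_eq_square)
  finally show ?thesis using False by simp
qed

lemma card_window_last_digit_block_ge:
  assumes "d \<in> D" "m0 \<in> digit_numbers n D i"
    and X: "real (n * m0 + d) \<le> X" "X \<le> real (n * m0 + d) + 1"
    and \<rho>: "1 \<le> \<rho>" "\<rho> \<le> 2 * real n ^ Suc i"
  shows "inverse (4 * real k ^ 2) * (2 * \<rho>) powr \<alpha> \<le> real (card (window (last_digit_block d i) X \<rho>))"
proof -
  let ?W = "window (last_digit_block d i) X \<rho>"
  have "(2 * \<rho>) powr \<alpha> \<le> 4 * real k ^ 2 * real (card ?W)"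
  proof (cases "\<rho> < real n")
    case True
    have "n * m0 + d \<in> ?W" using assms by (auto simp: window_def last_digit_block_def)
    then have "1 \<le> card ?W"
      using finite_window[OF finite_last_digit_block] by (auto simp: Suc_le_eq card_gt_0_iff)
    have "(2 * \<rho>) powr \<alpha> \<le> (2 * real n ^ 1) powr \<alpha>" using True \<rho>(1) alpha_pos by (intro powr_mono2) auto
    also have "\<dots> \<le> 2 * real k ^ 1" by (rule scaled_power_n_powr_alpha_le) simp
    also have "\<dots> \<le> 4 * real k ^ 2 * 1" using two_k_le_four_k_squared by simp
    also have "\<dots> \<le> 4 * real k ^ 2 * real (card ?W)" using \<open>1 \<le> card ?W\<close> by (intro mult_left_mono) auto
    finally show ?thesis .
  next
    case False
    obtain E where E: "real n ^ E \<le> \<rho>" "\<rho> < real n ^ Suc E"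
      using ex_power_bracket[OF two_le_n \<rho>(1)] by blast
    have "0 < E" using E(2) False by (cases E) auto
    have "real n ^ Suc (min (E - 1) i) \<le> real n ^ E"
      using \<open>0 < E\<close> two_le_n by (intro power_increasing) auto
    then have "k ^ min (E - 1) i \<le> card ?W"
      using E(1) by (intro card_window_last_digit_block_prefix_ge[OF assms(1,2) _ X]) auto
    then have "real k ^ min (E - 1) i \<le> real (card ?W)"
      by (metis of_nat_le_iff of_nat_power)
    then have "4 * real k ^ 2 * real k ^ min (E - 1) i \<le> 4 * real k ^ 2 * real (card ?W)"
      by (rule mult_left_mono) simp
    with powr_alpha_le_of_power_bracket[OF _ E(2) \<open>0 < E\<close> \<rho>(2)] \<rho>(1) show ?thesis by simp
  qed
  moreover have "0 < 4 * real k ^ 2" using two_le_k by simp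
  ultimately show ?thesis by (simp add: field_simps)
qed

definition block_endpoints :: "nat \<Rightarrow> nat \<Rightarrow> real set" where
  "block_endpoints d i = (\<lambda>m. real m / real n ^ Suc i) ` last_digit_block d i"

lemma ad_regular_block_endpoints:
  assumes "d \<in> D"
  shows "ad_regular \<alpha> (real n ^ Suc i) (4 * real k ^ 2) (block_endpoints d i)"
  unfolding block_endpoints_def
proof (rule ad_regular_scaled_nat_set)
  show "0 < real n ^ Suc i" using two_le_n by simp
next
  fix m assume "m \<in> last_digit_block d i"
  then have "m \<in> digit_numbers n D (Suc i)" using assms unfolding last_digit_block_def by auto
  then have "m < n ^ Suc i" by (rule digit_numbers_less_power[OF digits])
  then have "m + 1 \<le> n ^ Suc i" by simp
  then show "real m + 1 \<le> real n ^ Suc i" by (metis of_nat_1 of_nat_add of_nat_le_iff of_nat_power)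
next
  fix m m' assume "m \<in> last_digit_block d i" "m' \<in> last_digit_block d i" "m < m'"
  then obtain a b where "m = n * a + d" "m' = n * b + d" "a < b" unfolding last_digit_block_def by auto
  then have "m + n \<le> m'" by (metis add_le_mono1 add.commute add.left_commute mult_Suc_right mult_le_mono2 Suc_leI)
  then show "m + 1 < m'" using two_le_n by simp
next
  fix m X \<rho> assume "m \<in> last_digit_block d i" "real m \<le> X" "X \<le> real m + 1" "1 \<le> \<rho>" "\<rho> \<le> 2 * real n ^ Suc i"
  then obtain m0 where "m = n * m0 + d" "m0 \<in> digit_numbers n D i" unfolding last_digit_block_def by auto
  then show "inverse (4 * real k ^ 2) * (2 * \<rho>) powr \<alpha> \<le> real (card (window (last_digit_block d i) X \<rho>)) \<and>
       real (card (window (last_digit_block d i) X \<rho>)) \<le> 4 * real k ^ 2 * (2 * \<rho>) powr \<alpha>"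
    using card_window_last_digit_block_ge[OF assms] card_window_last_digit_block_le[OF assms]
      \<open>real m \<le> X\<close> \<open>X \<le> real m + 1\<close> \<open>1 \<le> \<rho>\<close> \<open>\<rho> \<le> 2 * real n ^ Suc i\<close> by blast
qed

lemma Cset_Suc_eq_UN_block_endpoints: "Cset n D (Suc i) = (\<Union>d\<in>D. block_endpoints d i)"
proof -
  have "Cset n D (Suc i) = (\<lambda>m. real m / real n ^ Suc i) ` digit_numbers n D (Suc i)"
    using two_le_n D_nonempty by (intro Cset_eq_digit_numbers) auto
  also have "\<dots> = (\<lambda>m. real m / real n ^ Suc i) ` (\<Union>d\<in>D. last_digit_block d i)"
    unfolding last_digit_block_def by auto
  finally show ?thesis unfolding block_endpoints_def image_UN .
qed

lemma finite_block_endpoints: "finite (block_endpoints d i)"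
  unfolding block_endpoints_def using finite_last_digit_block by simp

lemma card_block_endpoints: "card (block_endpoints d i) = k ^ i"
proof -
  have "card (block_endpoints d i) = card (last_digit_block d i)"
    unfolding block_endpoints_def using two_le_n by (intro card_image inj_onI) auto
  also have "\<dots> = card (digit_numbers n D i)"
    unfolding last_digit_block_def using two_le_n by (intro card_image inj_onI) auto
  finally show ?thesis using card_digit_numbers[OF digits finite_D] card_D by simp
qed

lemma block_endpoints_disjoint:
  assumes "d \<in> D" "d' \<in> D" "d \<noteq> d'"
  shows "block_endpoints d i \<inter> block_endpoints d' i = {}"
proof -
  have "real (n * m + d) \<noteq> real (n * m' + d')" for m m'
    unfolding of_nat_eq_iff
  proof
    assume "n * m + d = n * m' + d'"
    then have "(n * m + d) mod n = (n * m' + d') mod n" by simp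
    moreover have "d < n" "d' < n" using assms(1,2) digits by auto
    ultimately show False using assms(3) by simp
  qed
  then show ?thesis
    unfolding block_endpoints_def last_digit_block_def using two_le_n
    by (auto simp: divide_cancel_right simp del: of_nat_add of_nat_mult)
qed

lemma Dec_Suc_le_of_block_decoupling:
  assumes "0 < p" "0 \<le> M"
    and block: "\<And>d G. d \<in> D \<Longrightarrow>
      \<forall>s\<in>block_endpoints d i. fourier_supported p (G s) (theta s (1 / real n ^ Suc i) (1 / real n ^ (2 * Suc i))) \<Longrightarrow>
      Lp_norm p (\<lambda>x. \<Sum>s\<in>block_endpoints d i. G s x) \<le> M * sqrt (\<Sum>s\<in>block_endpoints d i. (Lp_norm p (G s))\<^sup>2)"
  shows "Dec p n D (Suc i) \<le> real k powr (1 + 1 / p) * M"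
proof (rule Dec_le)
  show "0 \<le> real k powr (1 + 1 / p) * M" using assms(2) by simp
next
  fix G :: "real \<Rightarrow> pt \<Rightarrow> complex"
  let ?C = "Cset n D (Suc i)"
  assume G: "\<forall>s\<in>?C. fourier_supported p (G s) (theta s (1 / real n ^ Suc i) (1 / real n ^ (2 * Suc i)))"
  define Q where "Q = sqrt (\<Sum>s\<in>?C. (Lp_norm p (G s))\<^sup>2)"
  define F where "F d x = (\<Sum>s\<in>block_endpoints d i. G s x)" for d x
  have block_sub: "block_endpoints d i \<subseteq> ?C" if "d \<in> D" for d
    using that unfolding Cset_Suc_eq_UN_block_endpoints by blast
  have finite_C: "finite ?C"
    unfolding Cset_Suc_eq_UN_block_endpoints using finite_D finite_block_endpoints by blast
  have integrable: "integrable lborel (G s)" "integrable lborel (\<lambda>x. norm (G s x) powr p)" if "s \<in> ?C" for s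
    using G that unfolding fourier_supported_def by auto
  have F_integrable: "integrable lborel (F d)" "integrable lborel (\<lambda>x. norm (F d x) powr p)" if "d \<in> D" for d
    unfolding F_def using integrable block_sub[OF that] finite_block_endpoints
    by (auto intro!: Bochner_Integration.integrable_sum integrable_norm_sum_powr[OF _ assms(1)])
  have F_bound: "Lp_norm p (F d) \<le> M * Q" if "d \<in> D" for d
  proof -
    have "Lp_norm p (F d) \<le> M * sqrt (\<Sum>s\<in>block_endpoints d i. (Lp_norm p (G s))\<^sup>2)"
      unfolding F_def using block[OF that] G block_sub[OF that] by blast
    also have "\<dots> \<le> M * Q" unfolding Q_def
      using assms(2) block_sub[OF that] finite_C by (intro mult_left_mono real_sqrt_le_mono sum_mono2) auto
    finally show ?thesis .
  qed
  have "(\<lambda>x. \<Sum>s\<in>?C. G s x) = (\<lambda>x. \<Sum>d\<in>D. F d x)"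
    unfolding F_def Cset_Suc_eq_UN_block_endpoints
    using finite_D finite_block_endpoints block_endpoints_disjoint by (intro ext sum.UNION_disjoint) auto
  moreover have "Lp_norm p (\<lambda>x. \<Sum>d\<in>D. F d x) \<le> real (card D) powr (1 + 1 / p) * (M * Q)"
    using assms(2) F_integrable F_bound unfolding Q_def
    by (intro Lp_norm_sum_le[OF finite_D assms(1)]) (auto simp: sum_nonneg)
  ultimately show "Lp_norm p (\<lambda>x. \<Sum>s\<in>?C. G s x) \<le> real k powr (1 + 1 / p) * M * sqrt (\<Sum>s\<in>?C. (Lp_norm p (G s))\<^sup>2)"
    unfolding Q_def card_D by (simp add: mult.assoc)
qed

lemma Dec_Suc_le_of_ad_decoupling_bound:
  assumes "0 < p" "0 \<le> K"
    and bound: "ad_decoupling_bound \<alpha> p \<gamma> (4 * real k ^ 2) (\<epsilon> * \<alpha> / 2) K"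
  shows "Dec p n D (Suc i)
    \<le> real k powr (1 + 1 / p) * K * real k powr (- \<gamma>) * real k powr (real (Suc i) * (\<gamma> + \<epsilon>))"
proof -
  define R where "R = real n ^ (2 * Suc i)"
  have "1 \<le> R" unfolding R_def using two_le_n by (intro one_le_power) simp
  have sqrt_R: "sqrt R = real n ^ Suc i" unfolding R_def mult.commute[of 2] power_mult by simp
  have "Dec p n D (Suc i) \<le> real k powr (1 + 1 / p) * (K * R powr (\<epsilon> * \<alpha> / 2) * real (k ^ i) powr \<gamma>)"
  proof (rule Dec_Suc_le_of_block_decoupling[OF assms(1)])
    show "0 \<le> K * R powr (\<epsilon> * \<alpha> / 2) * real (k ^ i) powr \<gamma>" using assms(2) by simp
  next
    fix d G assume "d \<in> D"
      and "\<forall>s\<in>block_endpoints d i. fourier_supported p (G s) (theta s (1 / real n ^ Suc i) (1 / real n ^ (2 * Suc i)))"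
    then show "Lp_norm p (\<lambda>x. \<Sum>s\<in>block_endpoints d i. G s x)
        \<le> K * R powr (\<epsilon> * \<alpha> / 2) * real (k ^ i) powr \<gamma> * sqrt (\<Sum>s\<in>block_endpoints d i. (Lp_norm p (G s))\<^sup>2)"
      using ad_decoupling_boundD[OF bound \<open>1 \<le> R\<close>, of "block_endpoints d i" G] ad_regular_block_endpoints
      unfolding card_block_endpoints sqrt_R by (simp add: R_def)
  qed
  also have "\<dots> = real k powr (1 + 1 / p) * K * real k powr (- \<gamma>) * real k powr (real (Suc i) * (\<gamma> + \<epsilon>))"
  proof -
    have R_powr: "R powr (\<epsilon> * \<alpha> / 2) = real k powr (real (Suc i) * \<epsilon>)"
      unfolding R_def by (rule power_double_n_powr_half_alpha)
    have "real (k ^ i) powr \<gamma> = (real k powr real i) powr \<gamma>"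
      using two_le_k by (simp add: powr_realpow)
    then have k_powr: "real (k ^ i) powr \<gamma> = real k powr (real i * \<gamma>)"
      by (simp add: powr_powr)
    have "real (Suc i) * \<epsilon> + real i * \<gamma> = - \<gamma> + real (Suc i) * (\<gamma> + \<epsilon>)"
      by (simp add: algebra_simps)
    then have exponents: "real k powr (real (Suc i) * \<epsilon>) * real k powr (real i * \<gamma>)
        = real k powr (- \<gamma>) * real k powr (real (Suc i) * (\<gamma> + \<epsilon>))"
      by (simp only: powr_add[symmetric])
    show ?thesis unfolding R_powr k_powr mult.assoc exponents ..
  qed
  finally show ?thesis .
qed

end

theorem mainTheorem4:
  fixes k n :: nat and D :: "nat set" and p c :: real
  assumes "2 \<le> k" "k < n"
    and "D \<subseteq> {0..<n}" "card D = k"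
    and "6 < p"
    and "thm11_holds (ln (real k) / ln (real n)) p c"
  shows "\<forall>\<epsilon> > 0. \<exists>C. \<forall>i \<ge> 1.
           Dec p n D i \<le> C * real k powr (real i * (1/2 - 3/p - c + \<epsilon>))"
proof (intro allI impI)
  fix \<epsilon> :: real assume "0 < \<epsilon>"
  define \<alpha> where "\<alpha> = ln (real k) / ln (real n)"
  interpret cantor_digit_set n k D \<alpha>
    using assms(1-4) by unfold_locales (simp_all add: \<alpha>_def)
  have "1 \<le> 4 * real k ^ 2" using two_k_le_four_k_squared two_le_k by simp
  (* at R = n^(2i) the loss R^(\<epsilon> \<alpha> / 2) of Theorem 1.1 is k^(i \<epsilon>) *)
  moreover have "0 < \<epsilon> * \<alpha> / 2" using \<open>0 < \<epsilon>\<close> alpha_pos by simp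
  ultimately obtain K where "0 \<le> K"
    and K: "ad_decoupling_bound \<alpha> p (1/2 - 3/p - c) (4 * real k ^ 2) (\<epsilon> * \<alpha> / 2) K"
    using thm11_holds_obtain_bound[OF assms(6)[folded \<alpha>_def]] by blast
  have "0 < p" using assms(5) by simp
  have "Dec p n D i \<le> real k powr (1 + 1 / p) * K * real k powr (- (1/2 - 3/p - c))
      * real k powr (real i * (1/2 - 3/p - c + \<epsilon>))" if "1 \<le> i" for i
    using Dec_Suc_le_of_ad_decoupling_bound[OF \<open>0 < p\<close> \<open>0 \<le> K\<close> K, of "i - 1"] that by simp
  then show "\<exists>C. \<forall>i \<ge> 1. Dec p n D i \<le> C * real k powr (real i * (1/2 - 3/p - c + \<epsilon>))"
    by blast
qed

end
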